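(* Let $(X_n)_{n\ge1}$ be a sequence of non-negative real random variables which is stochastically superadditive, i.e. for all integers $n,m\ge1$, $X_{n+m}$ stochastically dominates $X_n+X'_m$ where $X'_m$ is a copy of $X_m$ independent of $X_n$. Let $\rho_\star=\sup_{n\ge1}\mathbb{E}X_n/n\in[0,\infty]$. Then $X_n/n\to\rho_\star$ in probability as $n\to\infty$. Moreover, for every $\rho<\rho_\star$ there exists $c>0$ such that for all $n$ large enough, $\mathbb{P}(X_n/n\le\rho)\le e^{-cn}$. *)

theory Defs
  imports "HOL-Probability.Probability"
begin

definition stoch_dominates :: "real measure \<Rightarrow> real measure \<Rightarrow> bool" where
  "stoch_dominates P Q \<longleftrightarrow> (\<forall>t::real. measure Q {t<..} \<le> measure P {t<..})"

text \<open>Stochastic superadditivity of a sequence (X n), n \<ge> 1: the law of X (n+m)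
  dominates the law of X n + X' m with X' m an independent copy of X m, i.e.
  the convolution of the two laws.\<close>
definition stoch_superadditive :: "'a measure \<Rightarrow> (nat \<Rightarrow> 'a \<Rightarrow> real) \<Rightarrow> bool" where
  "stoch_superadditive M X \<longleftrightarrow>
     (\<forall>n m. 1 \<le> n \<longrightarrow> 1 \<le> m \<longrightarrow>
        stoch_dominates (distr M borel (X (n + m)))
                        (distr M borel (X n) \<star> distr M borel (X m)))"

definition rho_star :: "'a measure \<Rightarrow> (nat \<Rightarrow> 'a \<Rightarrow> real) \<Rightarrow> ennreal" where
  "rho_star M X = (SUP n\<in>{1..}. (\<integral>\<^sup>+ \<omega>. ennreal (X n \<omega>) \<partial>M) / of_nat n)"

end

(*
  Let L_n(l) = E exp(-l X_n) for l > 0. As x |-> exp(-l x) is decreasing, stochastic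
  domination of X_n + X'_m by X_(n+m) gives L_(n+m) <= L_n L_m. If rho < rho_star, choose k
  with E X_k > rho k; expanding exp to second order at a small l > 0 yields
  q := exp(l rho k) L_k(l) < 1. Chernoff's bound and submultiplicativity then give
  P(X_n <= rho n) <= exp(l rho n) L_k(l)^(n div k), which is at most a constant times q^(n/k).
  For the upper tail, E X_n/n <= rho_star < b: if X_n/n >= b with probability bounded away
  from 0, then X_n/n would have to be far below rho_star with probability bounded away
  from 0 as well, which the lower tail bound at a level a < rho_star close to rho_star excludes.
*)
theory Submission
  imports Defs "HOL-Real_Asymp.Real_Asymp"
begin

definition laplace :: "'a measure \<Rightarrow> ('a \<Rightarrow> real) \<Rightarrow> real \<Rightarrow> ennreal" where
  "laplace M Y l = (\<integral>\<^sup>+\<omega>. ennreal (exp (- l * Y \<omega>)) \<partial>M)"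

lemma exp_neg_eq_nn_integral_atLeast:
  fixes l x :: real
  assumes "0 < l"
  shows "ennreal (exp (- l * x)) = (\<integral>\<^sup>+s. ennreal (l * exp (- l * s)) * indicator {x..} s \<partial>lborel)"
proof -
  have "((\<lambda>s. - exp (- l * s)) \<longlongrightarrow> 0) at_top"
    using assms by real_asymp
  then have "(\<integral>\<^sup>+s. ennreal (l * exp (- l * s)) * indicator {x..} s \<partial>lborel) = ennreal (0 - (- exp (- l * x)))"
    using assms by (intro nn_integral_FTC_atLeast) (auto intro!: derivative_eq_intros)
  then show ?thesis
    by simp
qed

lemma laplace_id_eq_nn_integral_cdf:
  fixes R :: "real measure"
  assumes "sigma_finite_measure R" and sets_R: "sets R = sets borel" and "0 < l"
  shows "laplace R id l = (\<integral>\<^sup>+s. ennreal (l * exp (- l * s)) * emeasure R {..s} \<partial>lborel)"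
proof -
  interpret pair_sigma_finite R lborel
    by (intro pair_sigma_finite.intro assms(1) lborel.sigma_finite_measure_axioms)
  \<comment> \<open>the measurability prover handles this shifted form, but not the indicator of {x..} directly\<close>
  have "(\<lambda>(x, s). ennreal (l * exp (- l * s)) * indicator {0::real..} (s - x)) \<in> borel_measurable (R \<Otimes>\<^sub>M lborel)"
    using sets_R[measurable_cong] by measurable
  moreover have "(\<lambda>(x, s). ennreal (l * exp (- l * s)) * indicator {0::real..} (s - x))
      = (\<lambda>(x, s). ennreal (l * exp (- l * s)) * indicator {x..} s)"
    by (auto simp: indicator_def fun_eq_iff)
  ultimately have meas: "(\<lambda>(x, s). ennreal (l * exp (- l * s)) * indicator {x..} s) \<in> borel_measurable (R \<Otimes>\<^sub>M lborel)"
    by simp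
  have "laplace R id l = (\<integral>\<^sup>+x. \<integral>\<^sup>+s. ennreal (l * exp (- l * s)) * indicator {x..} s \<partial>lborel \<partial>R)"
    using exp_neg_eq_nn_integral_atLeast[OF \<open>0 < l\<close>] by (simp add: laplace_def)
  also have "\<dots> = (\<integral>\<^sup>+s. \<integral>\<^sup>+x. ennreal (l * exp (- l * s)) * indicator {..s} x \<partial>R \<partial>lborel)"
    using Fubini'[OF meas] by (simp add: indicator_def atLeast_def atMost_def)
  also have "\<dots> = (\<integral>\<^sup>+s. ennreal (l * exp (- l * s)) * emeasure R {..s} \<partial>lborel)"
    by (intro nn_integral_cong nn_integral_cmult_indicator) (simp add: sets_R)
  finally show ?thesis .
qed

lemma stoch_dominates_emeasure_atMost:
  assumes "prob_space P" "prob_space Q" "sets P = sets borel" "sets Q = sets borel"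
    and "stoch_dominates P Q"
  shows "emeasure P {..s} \<le> emeasure Q {..s}"
proof -
  interpret P: prob_space P by fact
  interpret Q: prob_space Q by fact
  have "space P = UNIV" "space Q = UNIV"
    using assms(3,4) by (auto dest!: sets_eq_imp_space_eq)
  then have "measure P {..s} = 1 - measure P {s<..}" "measure Q {..s} = 1 - measure Q {s<..}"
    using assms(3,4) P.prob_compl[of "{s<..}"] Q.prob_compl[of "{s<..}"]
    by (auto simp: Compl_eq_Diff_UNIV[symmetric] not_less)
  then show ?thesis
    using assms(5) by (simp add: stoch_dominates_def P.emeasure_eq_measure Q.emeasure_eq_measure)
qed

lemma stoch_dominates_laplace_le:
  assumes "prob_space P" "prob_space Q" "sets P = sets borel" "sets Q = sets borel"
    and "stoch_dominates P Q" and "0 < l"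
  shows "laplace P id l \<le> laplace Q id l"
  unfolding laplace_id_eq_nn_integral_cdf[OF prob_space_imp_sigma_finite[OF assms(1)] assms(3,6)]
    laplace_id_eq_nn_integral_cdf[OF prob_space_imp_sigma_finite[OF assms(2)] assms(4,6)]
  by (intro nn_integral_mono mult_left_mono stoch_dominates_emeasure_atMost[OF assms(1-5)]) auto

lemma laplace_distr:
  assumes "Y \<in> borel_measurable M"
  shows "laplace (distr M borel Y) id l = laplace M Y l"
  using assms by (simp add: laplace_def nn_integral_distr)

lemma laplace_convolution:
  assumes "finite_measure P" "finite_measure Q" "sets P = sets borel" "sets Q = sets borel"
  shows "laplace (P \<star> Q) id l = laplace P id l * laplace Q id l"
proof -
  have "laplace (P \<star> Q) id l = (\<integral>\<^sup>+x. \<integral>\<^sup>+y. ennreal (exp (- l * x)) * ennreal (exp (- l * y)) \<partial>Q \<partial>P)"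
    unfolding laplace_def using assms
    by (subst nn_integral_convolution)
       (auto simp: distrib_left exp_add[symmetric] ennreal_mult[symmetric] intro!: nn_integral_cong)
  also have "\<dots> = laplace P id l * laplace Q id l"
    unfolding laplace_def using assms(3,4)
    by (simp add: nn_integral_cmult nn_integral_multc)
  finally show ?thesis .
qed

lemma laplace_add_le_mult:
  assumes "prob_space M" and meas: "\<And>n. 1 \<le> n \<Longrightarrow> X n \<in> borel_measurable M"
    and "stoch_superadditive M X" and "1 \<le> n" "1 \<le> m" "0 < l"
  shows "laplace M (X (n + m)) l \<le> laplace M (X n) l * laplace M (X m) l"
proof -
  define law where "law j = distr M borel (X j)" for j
  have prob_law: "prob_space (law j)" if "1 \<le> j" for j
    unfolding law_def using meas[OF that] by (intro prob_space.prob_space_distr assms(1)) auto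
  have sets_law: "sets (law j) = sets borel" for j
    by (simp add: law_def)
  have prob_conv: "prob_space (law n \<star> law m)"
    unfolding convolution_def using sets_law[measurable_cong]
    by (intro prob_space.prob_space_distr prob_space_pair prob_law assms(4,5)) measurable
  have "laplace (law (n + m)) id l \<le> laplace (law n \<star> law m) id l"
    using assms(3-5) sets_law
    by (intro stoch_dominates_laplace_le prob_law prob_conv assms(6))
       (auto simp: stoch_superadditive_def law_def)
  also have "\<dots> = laplace (law n) id l * laplace (law m) id l"
    using assms(4,5) sets_law
    by (intro laplace_convolution prob_space.finite_measure prob_law)
  finally show ?thesis
    using assms(4,5) by (simp add: law_def laplace_distr meas)
qed

lemma laplace_le_1:
  assumes "prob_space M" "\<And>\<omega>. \<omega> \<in> space M \<Longrightarrow> 0 \<le> Y \<omega>" "0 \<le> l"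
  shows "laplace M Y l \<le> 1"
proof -
  have "laplace M Y l \<le> (\<integral>\<^sup>+\<omega>. 1 \<partial>M)"
    unfolding laplace_def using assms(2,3) by (intro nn_integral_mono) auto
  then show ?thesis
    using prob_space.emeasure_space_1[OF assms(1)] by simp
qed

lemma laplace_mult_le_power:
  assumes "prob_space M" "\<And>n. 1 \<le> n \<Longrightarrow> X n \<in> borel_measurable M"
    and "stoch_superadditive M X" "1 \<le> k" "0 < l" "1 \<le> d"
  shows "laplace M (X (d * k)) l \<le> laplace M (X k) l ^ d"
  using \<open>1 \<le> d\<close>
proof (induction d rule: dec_induct)
  case (step d)
  have "laplace M (X (Suc d * k)) l = laplace M (X (d * k + k)) l"
    by (simp add: add.commute)
  also have "\<dots> \<le> laplace M (X (d * k)) l * laplace M (X k) l"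
    using step.hyps assms(4) by (intro laplace_add_le_mult[OF assms(1-3) _ _ assms(5)]) auto
  also have "\<dots> \<le> laplace M (X k) l ^ Suc d"
    using step.IH by (simp add: mult_left_mono mult.commute)
  finally show ?case .
qed simp

lemma laplace_le_power_div:
  assumes M: "prob_space M" and meas: "\<And>n. 1 \<le> n \<Longrightarrow> X n \<in> borel_measurable M"
    and nonneg: "\<And>n \<omega>. 1 \<le> n \<Longrightarrow> \<omega> \<in> space M \<Longrightarrow> 0 \<le> X n \<omega>"
    and ss: "stoch_superadditive M X" and "1 \<le> k" "1 \<le> N" "0 < l"
  shows "laplace M (X N) l \<le> laplace M (X k) l ^ (N div k)"
proof -
  have le_1: "laplace M (X n) l \<le> 1" if "1 \<le> n" for n
    using nonneg[OF that] assms(7) by (intro laplace_le_1[OF M]) auto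
  consider "N div k = 0" | "N mod k = 0" "1 \<le> N div k" | "1 \<le> N mod k" "1 \<le> N div k"
    by linarith
  then show ?thesis
  proof cases
    case 1
    then show ?thesis
      using le_1 assms(6) by simp
  next
    case 2
    then show ?thesis
      using laplace_mult_le_power[OF M meas ss assms(5,7)] by (metis add.right_neutral div_mult_mod_eq)
  next
    case 3
    have "laplace M (X N) l = laplace M (X (N div k * k + N mod k)) l"
      by simp
    also have "\<dots> \<le> laplace M (X (N div k * k)) l * laplace M (X (N mod k)) l"
      using 3 assms(5) by (intro laplace_add_le_mult[OF M meas ss _ _ assms(7)]) auto
    also have "\<dots> \<le> laplace M (X (N div k * k)) l"
      using le_1[OF 3(1)] by (simp add: mult_left_le)
    also have "\<dots> \<le> laplace M (X k) l ^ (N div k)"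
      by (rule laplace_mult_le_power[OF M meas ss assms(5,7) 3(2)])
    finally show ?thesis .
  qed
qed

lemma chernoff_lower:
  assumes "Y \<in> borel_measurable M" "0 \<le> l"
  shows "emeasure M {\<omega> \<in> space M. Y \<omega> \<le> t} \<le> ennreal (exp (l * t)) * laplace M Y l"
proof -
  have "emeasure M {\<omega> \<in> space M. Y \<omega> \<le> t} = (\<integral>\<^sup>+\<omega>. indicator {\<omega> \<in> space M. Y \<omega> \<le> t} \<omega> \<partial>M)"
    using assms(1) by simp
  also have "\<dots> \<le> (\<integral>\<^sup>+\<omega>. ennreal (exp (l * t)) * ennreal (exp (- l * Y \<omega>)) \<partial>M)"
  proof (intro nn_integral_mono)
    fix \<omega> assume "\<omega> \<in> space M"
    have "Y \<omega> \<le> t \<Longrightarrow> 1 \<le> exp (l * t - l * Y \<omega>)"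
      using assms(2) by (simp add: mult_left_mono)
    then show "indicator {\<omega> \<in> space M. Y \<omega> \<le> t} \<omega> \<le> ennreal (exp (l * t)) * ennreal (exp (- l * Y \<omega>))"
      by (auto simp: indicator_def ennreal_mult[symmetric] exp_diff exp_minus field_simps)
  qed
  also have "\<dots> = ennreal (exp (l * t)) * laplace M Y l"
    unfolding laplace_def using assms(1) by (intro nn_integral_cmult) measurable
  finally show ?thesis .
qed

lemma exp_neg_le_quadratic:
  fixes z :: real
  assumes "-1 \<le> z"
  shows "exp (- z) \<le> 1 - z + z\<^sup>2"
proof (cases "z \<le> 0")
  case True
  then show ?thesis
    using exp_bound[of "- z"] assms by simp
next
  case False
  have "1 \<le> (1 - z + z\<^sup>2) * (1 + z)"
    using False by (simp add: algebra_simps power2_eq_square power3_eq_cube)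
  then have "1 / (1 + z) \<le> 1 - z + z\<^sup>2"
    using False by (simp add: divide_le_eq)
  moreover have "exp (- z) \<le> 1 / (1 + z)"
    using False by (simp add: exp_minus inverse_eq_divide frac_le)
  ultimately show ?thesis
    by linarith
qed

lemma exp_scaled_diff_le_quadratic:
  fixes a l y K :: real
  assumes "0 \<le> y" "y \<le> K" "0 \<le> a" "a \<le> K" "0 < l" "l * K \<le> 1"
  shows "exp (l * a - l * y) \<le> 1 - l * (y - a) + (l * K)\<^sup>2"
proof -
  define z where "z = l * (y - a)"
  have "l * a \<le> l * K"
    using assms(4,5) by simp
  moreover have "0 \<le> l * y"
    using assms(1,5) by simp
  ultimately have "-1 \<le> z"
    unfolding z_def right_diff_distrib using assms(6) by linarith
  have "\<bar>y - a\<bar> \<le> K"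
    using assms(1-4) by auto
  then have "\<bar>z\<bar> \<le> l * K"
    unfolding z_def abs_mult using assms(5) by simp
  then have "z\<^sup>2 \<le> (l * K)\<^sup>2"
    by (metis abs_ge_zero power2_abs power_mono)
  with exp_neg_le_quadratic[OF \<open>-1 \<le> z\<close>] show ?thesis
    by (simp add: z_def algebra_simps)
qed

lemma laplace_bounded_below_mean:
  assumes M: "prob_space M" and [measurable]: "Y \<in> borel_measurable M"
    and bounds: "\<And>\<omega>. \<omega> \<in> space M \<Longrightarrow> 0 \<le> Y \<omega> \<and> Y \<omega> \<le> K"
    and "0 \<le> a" "a < prob_space.expectation M Y"
  shows "\<exists>l>0. \<exists>q. 0 < q \<and> q < 1 \<and> ennreal (exp (l * a)) * laplace M Y l \<le> ennreal q"
proof -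
  interpret prob_space M by fact
  define b where "b = expectation Y"
  have int_Y: "integrable M Y"
    using bounds by (intro integrable_const_bound[where B=K]) auto
  have "b \<le> K"
    unfolding b_def using integral_mono[OF int_Y, of "\<lambda>_. K"] bounds by (simp add: prob_space)
  with assms(4,5) have ab: "a < b" "0 < K"
    by (auto simp: b_def)
  \<comment> \<open>\<open>l * K \<le> 1\<close> makes the quadratic bound for exp applicable, and
    \<open>l * K\<^sup>2 \<le> (b - a) / 2\<close> lets the linear gain \<open>l * (b - a)\<close> dominate the quadratic error.\<close>
  define l where "l = min (1 / K) ((b - a) / (2 * K\<^sup>2))"
  define q where "q = 1 - l * (b - a) / 2"
  have l: "0 < l" "l * K \<le> 1" "l * K\<^sup>2 \<le> (b - a) / 2"
    using ab by (auto simp: l_def field_simps min_def)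
  have "l * (b - a) \<le> l * K" "0 < l * (b - a)"
    using \<open>b \<le> K\<close> \<open>0 \<le> a\<close> l(1) ab by (auto intro: mult_left_mono)
  then have q: "0 < q" "q < 1"
    using l(2) unfolding q_def by linarith+
  have "l\<^sup>2 * K\<^sup>2 \<le> l * (b - a) / 2"
    using mult_left_mono[OF l(3), of l] l(1) by (simp add: power2_eq_square algebra_simps)
  then have q_bound: "1 - l * (b - a) + l\<^sup>2 * K\<^sup>2 \<le> q"
    by (simp add: q_def)
  have pointwise: "exp (l * a) * exp (- l * Y \<omega>) \<le> 1 - l * (Y \<omega> - a) + l\<^sup>2 * K\<^sup>2"
    if "\<omega> \<in> space M" for \<omega>
    using exp_scaled_diff_le_quadratic[of "Y \<omega>" K a l] bounds[OF that] \<open>0 \<le> a\<close> ab \<open>b \<le> K\<close> l(1,2)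
    by (simp add: exp_diff exp_minus field_simps power_mult_distrib)
  have "ennreal (exp (l * a)) * laplace M Y l = (\<integral>\<^sup>+\<omega>. ennreal (exp (l * a) * exp (- l * Y \<omega>)) \<partial>M)"
    unfolding laplace_def by (subst nn_integral_cmult[symmetric]) (auto simp: ennreal_mult)
  also have "\<dots> \<le> (\<integral>\<^sup>+\<omega>. ennreal (1 - l * (Y \<omega> - a) + l\<^sup>2 * K\<^sup>2) \<partial>M)"
    using pointwise by (intro nn_integral_mono ennreal_leI)
  also have "\<dots> = ennreal (1 - l * (b - a) + l\<^sup>2 * K\<^sup>2)"
  proof -
    have "0 \<le> 1 - l * (Y \<omega> - a) + l\<^sup>2 * K\<^sup>2" if "\<omega> \<in> space M" for \<omega>
      using pointwise[OF that] by (smt (verit) exp_gt_zero mult_pos_pos)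
    then show ?thesis
      using int_Y by (subst nn_integral_eq_integral) (auto simp: b_def prob_space algebra_simps)
  qed
  also have "\<dots> \<le> ennreal q"
    using q_bound by (rule ennreal_leI)
  finally show ?thesis
    using l(1) q by blast
qed

lemma SUP_ennreal_min_of_nat: "(SUP i::nat. ennreal (min x (real i))) = ennreal x"
proof (rule antisym)
  show "(SUP i::nat. ennreal (min x (real i))) \<le> ennreal x"
    by (rule SUP_least) (simp add: ennreal_leI)
  have "ennreal x = ennreal (min x (real (nat \<lceil>x\<rceil>)))"
    by (simp add: min_def) linarith
  then show "ennreal x \<le> (SUP i::nat. ennreal (min x (real i)))"
    by (metis UNIV_I SUP_upper)
qed

lemma laplace_below_mean:
  assumes M: "prob_space M" and [measurable]: "Y \<in> borel_measurable M"
    and nonneg: "\<And>\<omega>. \<omega> \<in> space M \<Longrightarrow> 0 \<le> Y \<omega>"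
    and "0 \<le> a" "ennreal a < (\<integral>\<^sup>+\<omega>. ennreal (Y \<omega>) \<partial>M)"
  shows "\<exists>l>0. \<exists>q. 0 < q \<and> q < 1 \<and> ennreal (exp (l * a)) * laplace M Y l \<le> ennreal q"
proof -
  interpret prob_space M by fact
  have "(\<integral>\<^sup>+\<omega>. ennreal (Y \<omega>) \<partial>M) = (\<integral>\<^sup>+\<omega>. (SUP i::nat. ennreal (min (Y \<omega>) (real i))) \<partial>M)"
    by (simp only: SUP_ennreal_min_of_nat)
  also have "\<dots> = (SUP i::nat. \<integral>\<^sup>+\<omega>. ennreal (min (Y \<omega>) (real i)) \<partial>M)"
    by (intro nn_integral_monotone_convergence_SUP) (auto intro!: incseq_SucI le_funI ennreal_leI)
  finally obtain i :: nat where i: "ennreal a < (\<integral>\<^sup>+\<omega>. ennreal (min (Y \<omega>) (real i)) \<partial>M)"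
    using assms(5) by (auto simp: less_SUP_iff)
  define T where "T \<omega> = min (Y \<omega>) (real i)" for \<omega>
  have [measurable]: "T \<in> borel_measurable M"
    unfolding T_def by measurable
  have T_bounds: "0 \<le> T \<omega> \<and> T \<omega> \<le> real i" if "\<omega> \<in> space M" for \<omega>
    using nonneg[OF that] by (simp add: T_def)
  have "integrable M T"
    using T_bounds by (intro integrable_const_bound[where B="real i"]) auto
  then have "(\<integral>\<^sup>+\<omega>. ennreal (T \<omega>) \<partial>M) = ennreal (expectation T)"
    using T_bounds by (intro nn_integral_eq_integral) auto
  with i have "a < expectation T"
    using \<open>0 \<le> a\<close> by (simp add: T_def ennreal_less_iff)
  then have "\<exists>l>0. \<exists>q. 0 < q \<and> q < 1 \<and> ennreal (exp (l * a)) * laplace M T l \<le> ennreal q"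
    by (intro laplace_bounded_below_mean[OF M _ T_bounds \<open>0 \<le> a\<close>]) auto
  then obtain l q where l: "0 < l" and q: "0 < q" "q < 1"
      and bound: "ennreal (exp (l * a)) * laplace M T l \<le> ennreal q"
    by blast
  have "laplace M Y l \<le> laplace M T l"
    unfolding laplace_def using l by (intro nn_integral_mono) (auto simp: T_def)
  then have "ennreal (exp (l * a)) * laplace M Y l \<le> ennreal q"
    using bound by (meson mult_left_mono order_trans zero_le)
  with l q show ?thesis
    by blast
qed

lemma power_div_le_exp_decay:
  fixes q C :: real
  assumes "0 < q" "q < 1" "1 \<le> k"
  shows "\<exists>c>0. \<forall>\<^sub>F n in sequentially. C * q ^ (n div k) \<le> exp (- c * real n)"
proof -
  define c where "c = - ln q / real k"
  have "0 < c"
    using assms by (simp add: c_def divide_neg_pos)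
  have geometric: "q ^ (n div k) \<le> exp (- c * real n) / q" for n
  proof -
    have "real n < real k + real k * real (n div k)"
      using dividend_less_times_div[of k n] assms(3) by (simp flip: of_nat_mult of_nat_add)
    then have "real n / real k - 1 \<le> real (n div k)"
      using assms(3) by (simp add: field_simps)
    then have "q ^ (n div k) \<le> q powr (real n / real k - 1)"
      using assms(1,2) by (simp add: powr_realpow[symmetric] powr_mono')
    also have "\<dots> = exp (- c * real n) / q"
      using assms(1) by (simp add: powr_diff powr_def c_def field_simps exp_diff)
    finally show ?thesis .
  qed
  have "\<forall>\<^sub>F n in sequentially. max 0 C * (exp (- c * real n) / q) \<le> exp (- (c / 2) * real n)"
    using \<open>0 < c\<close> \<open>0 < q\<close> by real_asymp
  then have "\<forall>\<^sub>F n in sequentially. C * q ^ (n div k) \<le> exp (- (c / 2) * real n)"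
  proof eventually_elim
    case (elim n)
    have "C * q ^ (n div k) \<le> max 0 C * q ^ (n div k)"
      using assms(1) by (intro mult_right_mono) auto
    also have "\<dots> \<le> max 0 C * (exp (- c * real n) / q)"
      using geometric by (intro mult_left_mono) auto
    finally show ?case
      using elim by linarith
  qed
  then show ?thesis
    using \<open>0 < c\<close> half_gt_zero by blast
qed

lemma less_rho_star_imp_less_nn_integral:
  assumes "0 \<le> \<rho>" "ennreal \<rho> < rho_star M X"
  shows "\<exists>k\<ge>1. ennreal (\<rho> * real k) < (\<integral>\<^sup>+\<omega>. ennreal (X k \<omega>) \<partial>M)"
proof -
  obtain k where k: "1 \<le> k" and less: "ennreal \<rho> < (\<integral>\<^sup>+\<omega>. ennreal (X k \<omega>) \<partial>M) / of_nat k"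
    using assms(2) unfolding rho_star_def less_SUP_iff by auto
  have "ennreal (\<rho> * real k) < (\<integral>\<^sup>+\<omega>. ennreal (X k \<omega>) \<partial>M)"
  proof (rule ccontr)
    assume "\<not> ?thesis"
    then have "(\<integral>\<^sup>+\<omega>. ennreal (X k \<omega>) \<partial>M) / of_nat k \<le> ennreal (\<rho> * real k) / of_nat k"
      by (intro divide_right_mono_ennreal) simp
    also have "\<dots> = ennreal \<rho>"
      using k assms(1) by (simp add: ennreal_of_nat_eq_real_of_nat divide_ennreal)
    finally show False
      using less by simp
  qed
  with k show ?thesis
    by blast
qed

lemma nn_integral_le_rho_star_mult:
  assumes "1 \<le> n"
  shows "(\<integral>\<^sup>+\<omega>. ennreal (X n \<omega>) \<partial>M) \<le> rho_star M X * of_nat n"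
proof -
  have "(\<integral>\<^sup>+\<omega>. ennreal (X n \<omega>) \<partial>M) / of_nat n \<le> rho_star M X"
    unfolding rho_star_def using assms by (intro SUP_upper) auto
  then have "(\<integral>\<^sup>+\<omega>. ennreal (X n \<omega>) \<partial>M) / of_nat n * of_nat n \<le> rho_star M X * of_nat n"
    by (rule mult_right_mono) simp
  moreover have "(of_nat n :: ennreal) / of_nat n = 1"
    using assms by (simp add: divide_eq_1_ennreal)
  ultimately show ?thesis
    by (simp add: ennreal_divide_times)
qed

lemma lower_tail_le_geometric:
  assumes M: "prob_space M" and meas: "\<And>n. 1 \<le> n \<Longrightarrow> X n \<in> borel_measurable M"
    and nonneg: "\<And>n \<omega>. 1 \<le> n \<Longrightarrow> \<omega> \<in> space M \<Longrightarrow> 0 \<le> X n \<omega>"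
    and ss: "stoch_superadditive M X" and "0 \<le> \<rho>" "ennreal \<rho> < rho_star M X"
  shows "\<exists>C q k. 0 < q \<and> q < 1 \<and> 1 \<le> k \<and>
    (\<forall>n\<ge>1. measure M {\<omega> \<in> space M. X n \<omega> / real n \<le> \<rho>} \<le> C * q ^ (n div k))"
proof -
  interpret prob_space M by fact
  obtain k where k: "1 \<le> k" and mean: "ennreal (\<rho> * real k) < (\<integral>\<^sup>+\<omega>. ennreal (X k \<omega>) \<partial>M)"
    using less_rho_star_imp_less_nn_integral[OF assms(5,6)] by blast
  then obtain l q where l: "0 < l" and q: "0 < q" "q < 1"
    and rate: "ennreal (exp (l * (\<rho> * real k))) * laplace M (X k) l \<le> ennreal q"
    using laplace_below_mean[OF M meas[OF k] nonneg[OF k] _ mean] assms(5) by auto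
  define C where "C = exp (l * \<rho> * real k)"
  have "measure M {\<omega> \<in> space M. X n \<omega> / real n \<le> \<rho>} \<le> C * q ^ (n div k)"
    if n: "1 \<le> n" for n
  proof -
    have "real n < real k * (1 + real (n div k))"
      using dividend_less_times_div[of k n] k by (simp add: algebra_simps flip: of_nat_mult of_nat_add)
    then have "l * (\<rho> * real n) \<le> l * \<rho> * real k + real (n div k) * (l * (\<rho> * real k))"
      using l assms(5) mult_left_mono[of "real n" "real k * (1 + real (n div k))" "l * \<rho>"]
      by (simp add: algebra_simps)
    then have exp_le: "ennreal (exp (l * (\<rho> * real n))) \<le> ennreal C * ennreal (exp (l * (\<rho> * real k))) ^ (n div k)"
      by (simp add: C_def ennreal_power exp_of_nat_mult[symmetric] flip: ennreal_mult' exp_add)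
    have "{\<omega> \<in> space M. X n \<omega> / real n \<le> \<rho>} = {\<omega> \<in> space M. X n \<omega> \<le> \<rho> * real n}"
      using n by (auto simp: divide_le_eq)
    then have "emeasure M {\<omega> \<in> space M. X n \<omega> / real n \<le> \<rho>}
        \<le> ennreal (exp (l * (\<rho> * real n))) * laplace M (X n) l"
      using chernoff_lower[OF meas[OF n]] l by simp
    also have "\<dots> \<le> ennreal C * ennreal (exp (l * (\<rho> * real k))) ^ (n div k) * laplace M (X k) l ^ (n div k)"
      using exp_le laplace_le_power_div[OF M meas nonneg ss k n l] by (intro mult_mono) auto
    also have "\<dots> = ennreal C * (ennreal (exp (l * (\<rho> * real k))) * laplace M (X k) l) ^ (n div k)"
      by (simp add: power_mult_distrib mult.assoc)
    also have "\<dots> \<le> ennreal C * ennreal q ^ (n div k)"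
      using rate by (intro mult_left_mono power_mono) auto
    also have "\<dots> = ennreal (C * q ^ (n div k))"
      using q by (simp add: C_def ennreal_mult' ennreal_power)
    finally show ?thesis
      using q by (simp add: emeasure_eq_measure C_def)
  qed
  with q k show ?thesis
    by blast
qed

lemma lower_tail_exponential:
  assumes M: "prob_space M" and meas: "\<And>n. 1 \<le> n \<Longrightarrow> X n \<in> borel_measurable M"
    and nonneg: "\<And>n \<omega>. 1 \<le> n \<Longrightarrow> \<omega> \<in> space M \<Longrightarrow> 0 \<le> X n \<omega>"
    and ss: "stoch_superadditive M X" and \<rho>: "ereal \<rho> < enn2ereal (rho_star M X)"
  shows "\<exists>c>0. \<forall>\<^sub>F n in sequentially. measure M {\<omega> \<in> space M. X n \<omega> / real n \<le> \<rho>} \<le> exp (- c * real n)"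
proof (cases "\<rho> < 0")
  case True
  have empty: "{\<omega> \<in> space M. X n \<omega> / real n \<le> \<rho>} = {}" if "1 \<le> n" for n
  proof -
    have "\<not> X n \<omega> / real n \<le> \<rho>" if "\<omega> \<in> space M" for \<omega>
      using nonneg[OF \<open>1 \<le> n\<close> that] True by (simp add: not_le order_less_le_trans)
    then show ?thesis
      by blast
  qed
  have "\<forall>\<^sub>F n in sequentially. measure M {\<omega> \<in> space M. X n \<omega> / real n \<le> \<rho>} \<le> exp (- 1 * real n)"
    by (rule eventually_sequentiallyI[of 1]) (simp add: empty)
  then show ?thesis
    using zero_less_one by blast
next
  case False
  with \<rho> have "0 \<le> \<rho>" "ennreal \<rho> < rho_star M X"
    by (simp_all add: less_ennreal.rep_eq enn2ereal_ennreal)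
  then obtain C q k where q: "0 < q" "q < 1" and k: "1 \<le> k"
    and bound: "\<And>n. 1 \<le> n \<Longrightarrow> measure M {\<omega> \<in> space M. X n \<omega> / real n \<le> \<rho>} \<le> C * q ^ (n div k)"
    using lower_tail_le_geometric[OF M meas nonneg ss] by blast
  obtain c where "0 < c" and decay: "\<forall>\<^sub>F n in sequentially. C * q ^ (n div k) \<le> exp (- c * real n)"
    using power_div_le_exp_decay[OF q k] by blast
  have "\<forall>\<^sub>F n in sequentially. measure M {\<omega> \<in> space M. X n \<omega> / real n \<le> \<rho>} \<le> exp (- c * real n)"
    using decay eventually_ge_at_top[of 1]
  proof eventually_elim
    case (elim n)
    then show ?case
      using bound[OF elim(2)] by linarith
  qed
  with \<open>0 < c\<close> show ?thesis
    by blast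
qed

lemma lower_tail_tendsto_0:
  assumes "prob_space M" "\<And>n. 1 \<le> n \<Longrightarrow> X n \<in> borel_measurable M"
    and "\<And>n \<omega>. 1 \<le> n \<Longrightarrow> \<omega> \<in> space M \<Longrightarrow> 0 \<le> X n \<omega>"
    and "stoch_superadditive M X" "ereal \<rho> < enn2ereal (rho_star M X)"
  shows "(\<lambda>n. measure M {\<omega> \<in> space M. X n \<omega> / real n \<le> \<rho>}) \<longlonglongrightarrow> 0"
proof -
  obtain c where "0 < c"
    and bound: "\<forall>\<^sub>F n in sequentially. measure M {\<omega> \<in> space M. X n \<omega> / real n \<le> \<rho>} \<le> exp (- c * real n)"
    using lower_tail_exponential[OF assms] by blast
  have "(\<lambda>n. exp (- c * real n)) \<longlonglongrightarrow> 0"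
    using \<open>0 < c\<close> by real_asymp
  moreover have "\<forall>\<^sub>F n in sequentially. norm (measure M {\<omega> \<in> space M. X n \<omega> / real n \<le> \<rho>}) \<le> exp (- c * real n)"
    using bound by (simp add: abs_of_nonneg)
  ultimately show ?thesis
    by (rule Lim_null_comparison[rotated])
qed

lemma upper_tail_le_mean_lower_tail:
  assumes "prob_space M" "integrable M Z" "\<And>\<omega>. \<omega> \<in> space M \<Longrightarrow> 0 \<le> Z \<omega>"
    and "prob_space.expectation M Z \<le> r" "a < b"
  shows "(b - a) * measure M {\<omega> \<in> space M. b \<le> Z \<omega>} \<le> r - a + a * measure M {\<omega> \<in> space M. Z \<omega> \<le> a}"
proof -
  interpret prob_space M by fact
  define A where "A = {\<omega> \<in> space M. b \<le> Z \<omega>}"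
  define B where "B = {\<omega> \<in> space M. Z \<omega> \<le> a}"
  have [measurable]: "Z \<in> borel_measurable M"
    using assms(2) by simp
  have sets: "A \<in> sets M" "B \<in> sets M"
    unfolding A_def B_def by measurable
  have ind: "integrable M (indicator A :: 'a \<Rightarrow> real)" "integrable M (indicator B :: 'a \<Rightarrow> real)"
    using sets by (auto intro!: integrable_const_bound[where B=1])
  moreover have "a + (b - a) * indicator A \<omega> - a * indicator B \<omega> \<le> Z \<omega>" if "\<omega> \<in> space M" for \<omega>
    using assms(3)[OF that] assms(5) that by (auto simp: A_def B_def indicator_def)
  ultimately have "(\<integral>\<omega>. a + (b - a) * indicator A \<omega> - a * indicator B \<omega> \<partial>M) \<le> expectation Z"
    using assms(2) by (intro integral_mono) auto
  moreover have "(\<integral>\<omega>. a + (b - a) * indicator A \<omega> - a * indicator B \<omega> \<partial>M)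
      = a + (b - a) * measure M A - a * measure M B"
    using sets ind by (simp add: prob_space)
  ultimately show ?thesis
    using assms(4) by (simp add: A_def B_def algebra_simps)
qed

lemma expectation_div_le_rho_star:
  assumes "prob_space M" "X n \<in> borel_measurable M" "\<And>\<omega>. \<omega> \<in> space M \<Longrightarrow> 0 \<le> X n \<omega>"
    and "rho_star M X = ennreal r" "0 \<le> r" "1 \<le> n"
  shows "integrable M (\<lambda>\<omega>. X n \<omega> / real n)" "prob_space.expectation M (\<lambda>\<omega>. X n \<omega> / real n) \<le> r"
proof -
  interpret prob_space M by fact
  have mean: "(\<integral>\<^sup>+\<omega>. ennreal (X n \<omega>) \<partial>M) \<le> ennreal (r * real n)"
    using nn_integral_le_rho_star_mult[OF assms(6), of M X] assms(4,5)
    by (simp add: ennreal_mult ennreal_of_nat_eq_real_of_nat)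
  then have int: "integrable M (X n)"
    using assms(2,3) by (intro integrableI_nonneg) (auto simp: top_unique intro: le_less_trans)
  then show "integrable M (\<lambda>\<omega>. X n \<omega> / real n)"
    by simp
  have "ennreal (expectation (X n)) \<le> ennreal (r * real n)"
    using mean int assms(3) by (simp add: nn_integral_eq_integral)
  then have "expectation (X n) \<le> r * real n"
    using assms(5) by (simp add: ennreal_le_iff)
  then show "expectation (\<lambda>\<omega>. X n \<omega> / real n) \<le> r"
    using assms(6) by (simp add: divide_le_eq)
qed

lemma upper_tail_tendsto_0:
  assumes M: "prob_space M" and meas: "\<And>n. 1 \<le> n \<Longrightarrow> X n \<in> borel_measurable M"
    and nonneg: "\<And>n \<omega>. 1 \<le> n \<Longrightarrow> \<omega> \<in> space M \<Longrightarrow> 0 \<le> X n \<omega>"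
    and ss: "stoch_superadditive M X" and b: "enn2ereal (rho_star M X) < ereal b"
  shows "(\<lambda>n. measure M {\<omega> \<in> space M. b \<le> X n \<omega> / real n}) \<longlonglongrightarrow> 0"
proof (rule order_tendstoI)
  fix \<epsilon> :: real
  assume "\<epsilon> < 0"
  then show "\<forall>\<^sub>F n in sequentially. \<epsilon> < measure M {\<omega> \<in> space M. b \<le> X n \<omega> / real n}"
    by (simp add: order_less_le_trans)
next
  fix \<epsilon> :: real
  assume "0 < \<epsilon>"
  define r where "r = enn2real (rho_star M X)"
  have r_eq: "rho_star M X = ennreal r"
    using b by (auto simp: r_def ennreal_enn2real_if)
  have "0 \<le> r"
    by (simp add: r_def)
  then have "r < b"
    using b unfolding r_eq by (simp add: enn2ereal_ennreal)
  note r = r_eq \<open>0 \<le> r\<close> \<open>r < b\<close>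
  define \<delta> where "\<delta> = \<epsilon> * (b - r) / 2"
  define a where "a = r - \<delta>"
  have "0 < \<delta>"
    using \<open>0 < \<epsilon>\<close> r(3) by (simp add: \<delta>_def)
  then have "ereal a < enn2ereal (rho_star M X)"
    using r(1,2) by (simp add: a_def enn2ereal_ennreal)
  then have lower: "(\<lambda>n. measure M {\<omega> \<in> space M. X n \<omega> / real n \<le> a}) \<longlonglongrightarrow> 0"
    using lower_tail_tendsto_0[OF M meas nonneg ss] by blast
  define bound where
    "bound n = (\<delta> + \<bar>a\<bar> * measure M {\<omega> \<in> space M. X n \<omega> / real n \<le> a}) / (b - r)" for n
  have "bound \<longlonglongrightarrow> (\<delta> + \<bar>a\<bar> * 0) / (b - r)"
    unfolding bound_def by (intro tendsto_intros lower) (use r(3) in simp)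
  moreover have "(\<delta> + \<bar>a\<bar> * 0) / (b - r) < \<epsilon>"
    using \<open>0 < \<epsilon>\<close> r(3) by (simp add: \<delta>_def field_simps)
  ultimately have bound_less: "\<forall>\<^sub>F n in sequentially. bound n < \<epsilon>"
    by (rule order_tendstoD(2))
  have le_bound: "measure M {\<omega> \<in> space M. b \<le> X n \<omega> / real n} \<le> bound n" if "1 \<le> n" for n
  proof -
    let ?p = "measure M {\<omega> \<in> space M. b \<le> X n \<omega> / real n}"
    let ?s = "measure M {\<omega> \<in> space M. X n \<omega> / real n \<le> a}"
    have "(b - a) * ?p \<le> r - a + a * ?s"
      using expectation_div_le_rho_star[OF M meas[OF that] nonneg[OF that] r(1,2) that] nonneg[OF that]
        \<open>0 < \<delta>\<close> r(3)
      by (intro upper_tail_le_mean_lower_tail[OF M]) (auto simp: a_def)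
    moreover have "a * ?s \<le> \<bar>a\<bar> * ?s" "(b - r) * ?p \<le> (b - a) * ?p"
      using \<open>0 < \<delta>\<close> by (auto intro!: mult_right_mono simp: a_def)
    ultimately have "(b - r) * ?p \<le> \<delta> + \<bar>a\<bar> * ?s"
      by (simp add: a_def)
    then show ?thesis
      using r(3) by (simp add: bound_def le_divide_eq mult.commute)
  qed
  show "\<forall>\<^sub>F n in sequentially. measure M {\<omega> \<in> space M. b \<le> X n \<omega> / real n} < \<epsilon>"
    using bound_less eventually_ge_at_top[of 1]
  proof eventually_elim
    case (elim n)
    then show ?case
      using le_bound[OF elim(2)] by linarith
  qed
qed

theorem lemma7:
  fixes M :: "'a measure" and X :: "nat \<Rightarrow> 'a \<Rightarrow> real"
  assumes "prob_space M"
    and "\<And>n. 1 \<le> n \<Longrightarrow> X n \<in> borel_measurable M"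
    and "\<And>n \<omega>. 1 \<le> n \<Longrightarrow> \<omega> \<in> space M \<Longrightarrow> 0 \<le> X n \<omega>"
    and "stoch_superadditive M X"
  shows "(\<forall>a::real. ereal a < enn2ereal (rho_star M X) \<longrightarrow>
            (\<lambda>n. measure M {\<omega> \<in> space M. X n \<omega> / real n \<le> a}) \<longlonglongrightarrow> 0)
       \<and> (\<forall>b::real. enn2ereal (rho_star M X) < ereal b \<longrightarrow>
            (\<lambda>n. measure M {\<omega> \<in> space M. b \<le> X n \<omega> / real n}) \<longlonglongrightarrow> 0)
       \<and> (\<forall>\<rho>::real. ereal \<rho> < enn2ereal (rho_star M X) \<longrightarrow>
            (\<exists>c>0. \<exists>N. \<forall>n\<ge>N. measure M {\<omega> \<in> space M. X n \<omega> / real n \<le> \<rho>}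
                               \<le> exp (- c * real n)))"
proof -
  have "\<exists>c>0. \<exists>N. \<forall>n\<ge>N. measure M {\<omega> \<in> space M. X n \<omega> / real n \<le> \<rho>} \<le> exp (- c * real n)"
    if "ereal \<rho> < enn2ereal (rho_star M X)" for \<rho>
    using lower_tail_exponential[OF assms that] by (simp add: eventually_sequentially)
  then show ?thesis
    using lower_tail_tendsto_0[OF assms] upper_tail_tendsto_0[OF assms] by blast
qed

end
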